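(* Let $k\ge1$ channels and $n>k$ players, each with one packet, under ternary feedback. Under protocol SOP — in every slot $t\ge1$, when $m$ players are pending ($1\le m\le n$), every pending player transmits on each channel with probability $1/\max\{m,k\}$ and stays idle with the remaining probability, independently — the expected finishing time (the first slot by which all players have transmitted successfully) is $O((n-k)/k)$.
   Context: In each slot, a player transmitting alone on a channel succeeds and leaves; two or more players transmitting on the same channel collide and remain pending. Ternary feedback: every pending player knows the current number $m$ of pending players in every slot. *)

theory Defs
  imports "HOL-Probability.Probability"
begin

text \<open>Protocol SOP with k channels (numbered 1..k; choice 0 = stay idle).
  When m players are pending, each pending player independently transmits
  with probability k / max m k, on a uniformly random channel, i.e. on each
  channel with probability 1 / max m k.\<close>

definition sop_choice :: "nat \<Rightarrow> nat \<Rightarrow> nat pmf" where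
  "sop_choice k m =
     bind_pmf (bernoulli_pmf (real k / real (max m k)))
       (\<lambda>b. if b then pmf_of_set {1..k} else return_pmf 0)"

definition sop_remaining :: "nat \<Rightarrow> (nat \<Rightarrow> nat) \<Rightarrow> nat" where
  "sop_remaining m f =
     card {i \<in> {..<m}. f i = 0 \<or> (\<exists>j\<in>{..<m}. j \<noteq> i \<and> f j = f i)}"

definition sop_step :: "nat \<Rightarrow> nat \<Rightarrow> nat pmf" where
  "sop_step k m = map_pmf (sop_remaining m) (Pi_pmf {..<m} 0 (\<lambda>_. sop_choice k m))"

primrec sop_pending :: "nat \<Rightarrow> nat \<Rightarrow> nat \<Rightarrow> nat pmf" where
  "sop_pending k n 0 = return_pmf n"
| "sop_pending k n (Suc t) = bind_pmf (sop_pending k n t) (sop_step k)"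

text \<open>Expected finishing time T = min {t. no player pending after t slots}.
  Since 0 is absorbing, T = #{t \<ge> 0. pending after t slots \<noteq> 0}, hence
  E[T] = sum over t of P(pending after t slots \<noteq> 0) (value in ennreal, may be \<infinity>).\<close>

definition sop_expected_finish :: "nat \<Rightarrow> nat \<Rightarrow> ennreal" where
  "sop_expected_finish k n =
     (\<Sum>t. ennreal (measure_pmf.prob (sop_pending k n t) {m. m \<noteq> 0}))"

end

theory Submission
  imports Defs
begin

text \<open>With \<open>m\<close> players pending and \<open>M = max m k\<close>, a fixed player is alone on some channel with
  probability at least \<open>k/M (1 - 1/M)^(m-1) \<ge> k/(e M)\<close>, so a slot removes at least \<open>min m k / e\<close> players
  in expectation. The potential \<open>e (m/k + min m k)\<close> is concave in \<open>m\<close>, hence it drops by at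
  least one in expectation per slot while players are pending. Summing this drift over all slots
  bounds \<open>E T = \<Sum>\<^sub>t P(X\<^sub>t \<noteq> 0)\<close> by the initial potential \<open>e (n/k + k)\<close>, which is at most
  \<open>4 e (n - k)/k\<close> once \<open>n \<ge> k (k + 2)\<close>.\<close>

lemma exp_neg_one_le_power: "exp (-1) \<le> (1 - 1 / real (Suc n)) ^ n"
proof (cases "n = 0")
  case False
  have "(1 + 1 / real n) ^ n \<le> exp 1"
    using False by (intro exp_ge_one_plus_x_over_n_power_n) auto
  then have "inverse (exp 1) \<le> inverse ((1 + 1 / real n) ^ n)"
    by (rule le_imp_inverse_le) (auto intro!: zero_less_power add_pos_nonneg)
  also have "1 + 1 / real n = inverse (1 - 1 / real (Suc n))"
    using False by (simp add: field_simps)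
  finally show ?thesis
    by (simp add: exp_minus power_inverse)
qed simp

lemma suminf_emeasure_le_drift:
  fixes p :: "nat \<Rightarrow> 'a pmf" and K :: "'a \<Rightarrow> 'a pmf" and V :: "'a \<Rightarrow> ennreal"
  assumes iterate: "\<And>t. p (Suc t) = bind_pmf (p t) K"
    and drift: "\<And>x. indicator A x + (\<integral>\<^sup>+y. V y \<partial>K x) \<le> V x"
  shows "(\<Sum>t. emeasure (measure_pmf (p t)) A) \<le> (\<integral>\<^sup>+x. V x \<partial>p 0)"
proof (rule suminf_le_const)
  let ?P = "\<lambda>t. emeasure (measure_pmf (p t)) A" and ?V = "\<lambda>t. \<integral>\<^sup>+x. V x \<partial>p t"
  have step: "?P t + ?V (Suc t) \<le> ?V t" for t
  proof -
    have "?P t + ?V (Suc t) = (\<integral>\<^sup>+x. indicator A x + (\<integral>\<^sup>+y. V y \<partial>K x) \<partial>p t)"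
      by (simp add: iterate nn_integral_add)
    also have "\<dots> \<le> ?V t"
      by (intro nn_integral_mono drift)
    finally show ?thesis .
  qed
  have partial: "(\<Sum>t<T. ?P t) + ?V T \<le> ?V 0" for T
  proof (induction T)
    case (Suc T)
    have "(\<Sum>t<Suc T. ?P t) + ?V (Suc T) = (\<Sum>t<T. ?P t) + (?P T + ?V (Suc T))"
      by (simp add: add.assoc)
    also have "\<dots> \<le> (\<Sum>t<T. ?P t) + ?V T"
      by (intro add_left_mono step)
    also have "\<dots> \<le> ?V 0"
      by (rule Suc.IH)
    finally show ?case .
  qed simp
  show "(\<Sum>t<T. ?P t) \<le> ?V 0" for T
    by (rule order_trans[OF add_increasing2[OF zero_le order_refl] partial])
qed simp

lemma pmf_sop_choice_channel:
  assumes "c \<in> {1..k}"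
  shows "pmf (sop_choice k m) c = 1 / real (max m k)"
proof -
  have "real k / real (max m k) \<le> 1"
    using assms by (auto simp: divide_le_eq_1)
  then show ?thesis
    using assms unfolding sop_choice_def pmf_bind
    by (subst integral_bernoulli_pmf) auto
qed

lemma set_pmf_sop_choice: "k \<ge> 1 \<Longrightarrow> set_pmf (sop_choice k m) \<subseteq> {0..k}"
  unfolding sop_choice_def by (auto simp: set_pmf_of_set split: if_splits)

lemma finite_set_pmf_Pi_sop_choice:
  assumes "k \<ge> 1"
  shows "finite (set_pmf (Pi_pmf {..<m} 0 (\<lambda>_. sop_choice k m)))"
proof (rule finite_subset)
  show "set_pmf (Pi_pmf {..<m} 0 (\<lambda>_. sop_choice k m)) \<subseteq> PiE_dflt {..<m} 0 (\<lambda>_. {0..k})"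
    using set_pmf_sop_choice[OF assms, of m] by (auto simp: set_Pi_pmf PiE_dflt_def)
qed (rule finite_PiE_dflt; simp)

lemma finite_set_pmf_sop_step: "k \<ge> 1 \<Longrightarrow> finite (set_pmf (sop_step k m))"
  unfolding sop_step_def by (simp add: finite_set_pmf_Pi_sop_choice)

lemma sop_step_0: "sop_step k 0 = return_pmf 0"
  unfolding sop_step_def sop_remaining_def by simp

definition sop_success :: "nat \<Rightarrow> nat \<Rightarrow> (nat \<Rightarrow> nat) set" where
  "sop_success m i = {f. f i \<noteq> 0 \<and> (\<forall>j\<in>{..<m}. j \<noteq> i \<longrightarrow> f j \<noteq> f i)}"

lemma real_sop_remaining:
  "real (sop_remaining m f) = real m - (\<Sum>i<m. indicator (sop_success m i) f)"
proof -
  let ?S = "{i \<in> {..<m}. f \<in> sop_success m i}"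
  have "sop_remaining m f = card ({..<m} - ?S)"
    unfolding sop_remaining_def by (rule arg_cong[of _ _ card]) (auto simp: sop_success_def)
  also have "\<dots> = m - card ?S"
    by (subst card_Diff_subset) auto
  moreover have "card ?S \<le> m"
    using card_mono[of "{..<m}" ?S] by auto
  ultimately have "real (sop_remaining m f) = real m - real (card ?S)"
    by (simp add: of_nat_diff)
  moreover have "real (card ?S) = (\<Sum>i<m. indicator (sop_success m i) f)"
    by (simp add: indicator_def sum.If_cases Int_def conj_commute)
  ultimately show ?thesis
    by simp
qed

lemma prob_sop_success_ge:
  assumes "k \<ge> 1" "i < m"
  defines "M \<equiv> real (max m k)"
  shows "measure_pmf.prob (Pi_pmf {..<m} 0 (\<lambda>_. sop_choice k m)) (sop_success m i)
    \<ge> real k / M * (1 - 1 / M) ^ (m - 1)"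
proof -
  let ?P = "Pi_pmf {..<m} 0 (\<lambda>_. sop_choice k m)"
  define alone_on :: "nat \<Rightarrow> (nat \<Rightarrow> nat) set" where
    "alone_on c = PiE_dflt {..<m} 0 (\<lambda>j. if j = i then {c} else - {c})" for c
  have alone_on_at: "f i = c" and alone_on_others: "\<forall>j\<in>{..<m}. j \<noteq> i \<longrightarrow> f j \<noteq> c"
    if "f \<in> alone_on c" for f c
    using that \<open>i < m\<close> by (auto simp: alone_on_def PiE_dflt_def)
  have prob_alone_on: "measure_pmf.prob ?P (alone_on c) = 1 / M * (1 - 1 / M) ^ (m - 1)"
    if "c \<in> {1..k}" for c
  proof -
    have "measure_pmf.prob (sop_choice k m) (- {c}) = 1 - 1 / M"
      using measure_pmf.prob_compl[of "{c}" "sop_choice k m"] pmf_sop_choice_channel[OF that]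
      by (simp add: measure_pmf_single Compl_eq_Diff_UNIV M_def)
    then have "measure_pmf.prob ?P (alone_on c) = (\<Prod>j<m. if j = i then 1 / M else 1 - 1 / M)"
      unfolding alone_on_def measure_Pi_pmf_PiE_dflt[OF finite_lessThan]
      by (intro prod.cong) (auto simp: measure_pmf_single pmf_sop_choice_channel[OF that] M_def)
    then show ?thesis
      using \<open>i < m\<close> by (simp add: prod_gen_delta)
  qed
  have disjoint: "disjoint_family_on alone_on {1..k}"
    unfolding disjoint_family_on_def by (metis alone_on_at disjoint_iff)
  have "real k / M * (1 - 1 / M) ^ (m - 1) = (\<Sum>c\<in>{1..k}. 1 / M * (1 - 1 / M) ^ (m - 1))"
    by simp
  also have "\<dots> = (\<Sum>c\<in>{1..k}. measure_pmf.prob ?P (alone_on c))"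
    by (rule sum.cong) (simp_all add: prob_alone_on)
  also have "\<dots> = measure_pmf.prob ?P (\<Union>c\<in>{1..k}. alone_on c)"
    by (rule measure_pmf.finite_measure_finite_Union[OF _ _ disjoint, symmetric]) simp_all
  also have "\<dots> \<le> measure_pmf.prob ?P (sop_success m i)"
  proof (rule measure_pmf.finite_measure_mono)
    show "(\<Union>c\<in>{1..k}. alone_on c) \<subseteq> sop_success m i"
      unfolding sop_success_def using alone_on_at alone_on_others by fastforce
  qed simp
  finally show ?thesis .
qed

lemma expectation_sop_step_le:
  assumes "k \<ge> 1"
  shows "measure_pmf.expectation (sop_step k m) real \<le> real m - real (min m k) / exp 1"
proof -
  let ?P = "Pi_pmf {..<m} 0 (\<lambda>_. sop_choice k m)"
  let ?M = "real (max m k)"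
  have int: "integrable (measure_pmf ?P) g" for g :: "_ \<Rightarrow> real"
    by (intro integrable_measure_pmf_finite finite_set_pmf_Pi_sop_choice assms)
  have "measure_pmf.expectation (sop_step k m) real
      = real m - (\<Sum>i<m. measure_pmf.prob ?P (sop_success m i))"
    unfolding sop_step_def
    by (simp add: real_sop_remaining Bochner_Integration.integral_diff[OF int int]
        Bochner_Integration.integral_sum[OF int])
  also have "\<dots> \<le> real m - (\<Sum>i<m. real k / ?M * (1 - 1 / ?M) ^ (m - 1))"
    by (intro diff_left_mono sum_mono prob_sop_success_ge[OF assms]) simp
  also have "\<dots> \<le> real m - real (min m k) / exp 1"
  proof -
    have "exp (-1) \<le> (1 - 1 / ?M) ^ (max m k - 1)"
      using exp_neg_one_le_power[of "max m k - 1"] assms by (simp add: Suc_diff_le)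
    also have "\<dots> \<le> (1 - 1 / ?M) ^ (m - 1)"
      using assms by (intro power_decreasing) auto
    finally have "real (min m k) * exp (-1) \<le> real (min m k) * (1 - 1 / ?M) ^ (m - 1)"
      by (intro mult_left_mono) auto
    moreover have "(\<Sum>i<m. real k / ?M * (1 - 1 / ?M) ^ (m - 1))
        = real (min m k) * (1 - 1 / ?M) ^ (m - 1)"
      using assms by (simp add: min_def max_def)
    ultimately show ?thesis
      by (simp add: exp_minus field_simps)
  qed
  finally show ?thesis .
qed

definition sop_potential :: "nat \<Rightarrow> nat \<Rightarrow> real" where
  "sop_potential k m = exp 1 * (real m / real k + real (min m k))"

lemma sop_potential_le_tangent:
  "sop_potential k y
    \<le> sop_potential k m + exp 1 * (1 / real k + of_bool (m < k)) * (real y - real m)"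
proof -
  have "real y / real k + real (min y k)
      \<le> real m / real k + real (min m k) + (1 / real k + of_bool (m < k)) * (real y - real m)"
    by (auto simp: min_def algebra_simps diff_divide_distrib)
  then have "exp 1 * (real y / real k + real (min y k))
      \<le> exp 1 * (real m / real k + real (min m k) + (1 / real k + of_bool (m < k)) * (real y - real m))"
    by (rule mult_left_mono) simp
  then show ?thesis
    unfolding sop_potential_def by (simp only: mult.assoc) (simp only: distrib_left)
qed

lemma sop_potential_drift:
  assumes "k \<ge> 1" "m \<ge> 1"
  shows "measure_pmf.expectation (sop_step k m) (sop_potential k) + 1 \<le> sop_potential k m"
proof -
  define slope where "slope = exp 1 * (1 / real k + of_bool (m < k))"
  have int: "integrable (measure_pmf (sop_step k m)) g" for g :: "nat \<Rightarrow> real"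
    by (rule integrable_measure_pmf_finite[OF finite_set_pmf_sop_step[OF assms(1)]])
  have "slope \<ge> 0"
    by (simp add: slope_def)
  have "measure_pmf.expectation (sop_step k m) (sop_potential k)
      \<le> measure_pmf.expectation (sop_step k m) (\<lambda>y. sop_potential k m + slope * (real y - real m))"
    by (intro integral_mono int) (simp add: slope_def sop_potential_le_tangent)
  also have "\<dots> = sop_potential k m + slope * (measure_pmf.expectation (sop_step k m) real - real m)"
    by (simp add: Bochner_Integration.integral_add[OF int int] Bochner_Integration.integral_diff[OF int int])
  also have "\<dots> \<le> sop_potential k m + slope * - (real (min m k) / exp 1)"
    using expectation_sop_step_le[OF assms(1), of m] \<open>slope \<ge> 0\<close>
    by (intro add_left_mono mult_left_mono) auto
  finally have "measure_pmf.expectation (sop_step k m) (sop_potential k)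
      \<le> sop_potential k m - slope * (real (min m k) / exp 1)"
    by simp
  moreover have "slope * (real (min m k) / exp 1) = real (min m k) / real k + of_bool (m < k) * real m"
    by (simp add: slope_def distrib_right min_def)
  moreover have "real (min m k) / real k + of_bool (m < k) * real m \<ge> 1"
    using assms by (cases "m < k") (simp_all add: min_def add_increasing)
  ultimately show ?thesis
    by linarith
qed

lemma sop_potential_drift_ennreal:
  assumes "k \<ge> 1"
  shows "indicator {x. x \<noteq> 0} m + (\<integral>\<^sup>+y. ennreal (sop_potential k y) \<partial>sop_step k m)
    \<le> ennreal (sop_potential k m)"
proof (cases "m = 0")
  case False
  have "(\<integral>\<^sup>+y. ennreal (sop_potential k y) \<partial>sop_step k m)
      = ennreal (measure_pmf.expectation (sop_step k m) (sop_potential k))"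
    by (intro nn_integral_eq_integral integrable_measure_pmf_finite finite_set_pmf_sop_step assms)
      (simp add: sop_potential_def)
  moreover have "measure_pmf.expectation (sop_step k m) (sop_potential k) \<ge> 0"
    by (simp add: sop_potential_def)
  moreover have "ennreal (1 + measure_pmf.expectation (sop_step k m) (sop_potential k))
      \<le> ennreal (sop_potential k m)"
    using sop_potential_drift[OF assms, of m] False by (intro ennreal_leI) simp
  ultimately show ?thesis
    using False by simp
qed (simp add: sop_step_0 sop_potential_def)

lemma sop_expected_finish_le_potential:
  assumes "k \<ge> 1"
  shows "sop_expected_finish k n \<le> ennreal (sop_potential k n)"
proof -
  have "sop_expected_finish k n = (\<Sum>t. emeasure (measure_pmf (sop_pending k n t)) {x. x \<noteq> 0})"
    unfolding sop_expected_finish_def by (simp add: measure_pmf.emeasure_eq_measure)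
  also have "\<dots> \<le> (\<integral>\<^sup>+x. ennreal (sop_potential k x) \<partial>sop_pending k n 0)"
  proof (rule suminf_emeasure_le_drift)
    show "sop_pending k n (Suc t) = bind_pmf (sop_pending k n t) (sop_step k)" for t
      by simp
    show "indicator {x. x \<noteq> 0} m + (\<integral>\<^sup>+y. ennreal (sop_potential k y) \<partial>sop_step k m)
        \<le> ennreal (sop_potential k m)" for m
      by (rule sop_potential_drift_ennreal[OF assms])
  qed
  finally show ?thesis
    by simp
qed

lemma sop_potential_le:
  assumes "k \<ge> 1" "k * (k + 2) \<le> n"
  shows "sop_potential k n \<le> 4 * exp 1 * (real n - real k) / real k"
proof -
  have "k * (k + 4) \<le> 3 * n"
    using assms(2) by (simp add: algebra_simps)
  then have "real k * (real k + 4) \<le> 3 * real n"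
    using of_nat_le_iff[of "k * (k + 4)" "3 * n", where 'a = real] by simp
  then have "(real n + real k * real k) / real k \<le> 4 * (real n - real k) / real k"
    by (intro divide_right_mono) (simp_all add: algebra_simps)
  moreover have "(real n + real k * real k) / real k = real n / real k + real k"
    using assms(1) by (simp add: field_simps)
  ultimately have "real n / real k + real k \<le> 4 * (real n - real k) / real k"
    by simp
  from mult_left_mono[OF this exp_ge_zero] show ?thesis
    using assms by (simp add: sop_potential_def ac_simps min_def)
qed

theorem lemma9:
  shows "\<exists>C::real. C > 0 \<and>
    (\<forall>k::nat. k \<ge> 1 \<longrightarrow> (\<exists>N::nat. \<forall>n::nat. n \<ge> N \<and> n > k \<longrightarrow>
        sop_expected_finish k n \<le> ennreal (C * (real n - real k) / real k)))"
proof (intro exI[of _ "4 * exp 1"] conjI allI impI exI[of _ "k * (k + 2)" for k])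
  fix k n :: nat
  assume "k \<ge> 1" and "k * (k + 2) \<le> n \<and> k < n"
  then show "sop_expected_finish k n \<le> ennreal (4 * exp 1 * (real n - real k) / real k)"
    using sop_expected_finish_le_potential sop_potential_le
    by (meson ennreal_leI order_trans)
qed simp

end
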